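(* Let $t\in\mathbb{R}$ and $u\in\mathbb{R}\setminus\{0,1\}$. Then $\mathfrak{g}_{t,u}\in\mathcal{P}^s_{4,4}$ if and only if $V_F(t,\omega(u))\ge0$. Moreover $-\mathfrak{g}_{t,u}\notin\mathcal{P}^s_{4,4}$.
   Context: Variables $a,b,c,d$. Put $s_0=a^4+b^4+c^4+d^4-4abcd$; $s_1=T_{3,1}-12abcd$ with $T_{3,1}=\sum_{i\ne j}x_i^3x_j$; $s_2=\sum_{i<j}x_i^2x_j^2-6abcd$; $s_3=T_{2,1,1}-12abcd$ with $T_{2,1,1}=\sum_i x_i^2\sum_{j<k,\ j,k\ne i}x_jx_k$; $s_4=abcd$ (here $(x_1,x_2,x_3,x_4)=(a,b,c,d)$). Let $\omega(u)=u+\frac1u-2$ and $p^G_0(t,w)=(4t+2)w^2-3(t-1)^2w$, $p^G_1(t,w)=-2(t+1)^2w^2+2(t+1)(t-1)^2w$, $p^G_2(t,w)=4t^2w^2-2(t-1)^2(2t-1)w+2(t-1)^4$, $p^G_3(t,w)=2(t+1)^2w^2-(t-1)^2(t^2+3)w-2(t-1)^4$, $p^G_4(t,w)=2(t-1)^4w^2$, and for $u\ne0$, $\mathfrak{g}_{t,u}=u^2\sum_{i=0}^4p^G_i(t,\omega(u))s_i$. Let $V_F(t,w)=(3+6t-t^2)w^2-6(t-1)^2w$. $\mathcal{P}^s_{4,4}$ is the cone of symmetric real quartic forms in $a,b,c,d$ that are nonnegative on $\mathbb{R}^4$. *)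

theory Defs
  imports "HOL-Analysis.Analysis" "HOL-Combinatorics.Permutations"
begin

type_synonym form4 = "real \<Rightarrow> real \<Rightarrow> real \<Rightarrow> real \<Rightarrow> real"

definition s0 :: form4 where
  "s0 a b c d = a^4 + b^4 + c^4 + d^4 - 4*a*b*c*d"

definition T31 :: form4 where
  "T31 a b c d = a^3*(b+c+d) + b^3*(a+c+d) + c^3*(a+b+d) + d^3*(a+b+c)"

definition s1 :: form4 where
  "s1 a b c d = T31 a b c d - 12*a*b*c*d"

definition s2 :: form4 where
  "s2 a b c d = a^2*b^2 + a^2*c^2 + a^2*d^2 + b^2*c^2 + b^2*d^2 + c^2*d^2 - 6*a*b*c*d"

definition T211 :: form4 where
  "T211 a b c d = a^2*(b*c + b*d + c*d) + b^2*(a*c + a*d + c*d)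
                + c^2*(a*b + a*d + b*d) + d^2*(a*b + a*c + b*c)"

definition s3 :: form4 where
  "s3 a b c d = T211 a b c d - 12*a*b*c*d"

definition s4 :: form4 where
  "s4 a b c d = a*b*c*d"

definition omega :: "real \<Rightarrow> real" where
  "omega u = u + 1/u - 2"

definition pG0 :: "real \<Rightarrow> real \<Rightarrow> real" where
  "pG0 t w = (4*t+2)*w^2 - 3*(t-1)^2*w"
definition pG1 :: "real \<Rightarrow> real \<Rightarrow> real" where
  "pG1 t w = -2*(t+1)^2*w^2 + 2*(t+1)*(t-1)^2*w"
definition pG2 :: "real \<Rightarrow> real \<Rightarrow> real" where
  "pG2 t w = 4*t^2*w^2 - 2*(t-1)^2*(2*t-1)*w + 2*(t-1)^4"
definition pG3 :: "real \<Rightarrow> real \<Rightarrow> real" where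
  "pG3 t w = 2*(t+1)^2*w^2 - (t-1)^2*(t^2+3)*w - 2*(t-1)^4"
definition pG4 :: "real \<Rightarrow> real \<Rightarrow> real" where
  "pG4 t w = 2*(t-1)^4*w^2"

definition gfrak :: "real \<Rightarrow> real \<Rightarrow> form4" where
  "gfrak t u a b c d = u^2 * (pG0 t (omega u) * s0 a b c d + pG1 t (omega u) * s1 a b c d
      + pG2 t (omega u) * s2 a b c d + pG3 t (omega u) * s3 a b c d + pG4 t (omega u) * s4 a b c d)"

definition VF :: "real \<Rightarrow> real \<Rightarrow> real" where
  "VF t w = (3 + 6*t - t^2)*w^2 - 6*(t-1)^2*w"

definition quartic_form :: "form4 \<Rightarrow> bool" where
  "quartic_form f \<longleftrightarrow> (\<exists>coef :: nat \<Rightarrow> nat \<Rightarrow> nat \<Rightarrow> nat \<Rightarrow> real.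
     \<forall>a b c d. f a b c d =
       (\<Sum>(i,j,k,l) \<in> {(i,j,k,l). i + j + k + l = 4}. coef i j k l * a^i * b^j * c^k * d^l))"

definition symmetric_form :: "form4 \<Rightarrow> bool" where
  "symmetric_form f \<longleftrightarrow> (\<forall>\<sigma> x. \<sigma> permutes {0::nat..<4} \<longrightarrow>
     f (x (\<sigma> 0)) (x (\<sigma> 1)) (x (\<sigma> 2)) (x (\<sigma> 3)) = f (x 0) (x 1) (x 2) (x 3))"

definition Ps44 :: "form4 set" where
  "Ps44 = {f. quartic_form f \<and> symmetric_form f \<and> (\<forall>a b c d. f a b c d \<ge> 0)}"

end

theory Submission
  imports Defs
begin

text \<open>
  Put w = omega u; it is nonzero, and gfrak t u = u^2 G with G = gform t w = sum_i pG_i(t,w) s_i.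
  On points (x,x,x,y) the form factors as G = (t x - y)^2 R(x,y), where R = rform t w is a binary
  quadratic form with 2 R_xx = V + (t-3)^2 w^2, 2 R_yy = V + (t+1)^2 w^2 and discriminant
  -4 (t-1)^2 w^2 V, V = VF(t,w). If V < 0 then R is indefinite, hence negative at a point off
  the line y = t x, where G < 0.
  If V >= 0 then R is positive semidefinite. Substituting a = m+p+q+r, b = m+p-q-r,
  c = m-p+q-r, d = m-p-q+r, G becomes, for fixed m and S = p^2+q^2+r^2 = 3k^2, an affine function
  of P = pqr and E = p^2q^2+q^2r^2+r^2p^2. These range over the triangle with vertices (0,0) and
  (+-k^3, 3k^4), where G is a perfect square, respectively a value (t x - y)^2 R(x,y) at a point
  of type (y,x,x,x); hence G >= 0. Finally G is positive at (1,1,1,1) or, for t = 1, at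
  (1,0,0,0), so -gfrak t u is never nonnegative.
\<close>

section \<open>Homogeneous forms in four variables\<close>

definition homogeneous_form :: "nat \<Rightarrow> form4 \<Rightarrow> bool" where
  "homogeneous_form n f \<longleftrightarrow> (\<exists>coef :: nat \<Rightarrow> nat \<Rightarrow> nat \<Rightarrow> nat \<Rightarrow> real.
     \<forall>a b c d. f a b c d =
       (\<Sum>(i,j,k,l) \<in> {(i,j,k,l). i + j + k + l = n}. coef i j k l * a^i * b^j * c^k * d^l))"

lemma quartic_form_iff_homogeneous: "quartic_form f \<longleftrightarrow> homogeneous_form 4 f"
  unfolding quartic_form_def homogeneous_form_def ..

definition exponents :: "nat \<Rightarrow> (nat \<times> nat \<times> nat \<times> nat) set" where
  "exponents n = {(i,j,k,l). i + j + k + l = n}"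

fun monomial :: "nat \<times> nat \<times> nat \<times> nat \<Rightarrow> form4" where
  "monomial (i,j,k,l) a b c d = a^i * b^j * c^k * d^l"

lemma monomial_eq: "monomial (i,j,k,l) = (\<lambda>a b c d. a^i * b^j * c^k * d^l)"
  by (simp add: fun_eq_iff)

lemma finite_exponents: "finite (exponents n)"
  by (rule finite_subset[of _ "{..n} \<times> {..n} \<times> {..n} \<times> {..n}"]) (auto simp: exponents_def)

lemma homogeneous_form_iff:
  "homogeneous_form n f \<longleftrightarrow>
     (\<exists>C. \<forall>a b c d. f a b c d = (\<Sum>e\<in>exponents n. C e * monomial e a b c d))"
proof -
  have split: "(\<lambda>(i,j,k,l). C (i,j,k,l) * a^i * b^j * c^k * d^l) = (\<lambda>e. C e * monomial e a b c d)"
    for C :: "_ \<Rightarrow> real" and a b c d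
    by (auto simp: fun_eq_iff)
  show ?thesis
  proof
    assume "homogeneous_form n f"
    then obtain coef where "\<forall>a b c d. f a b c d =
        (\<Sum>(i,j,k,l) \<in> exponents n. coef i j k l * a^i * b^j * c^k * d^l)"
      unfolding homogeneous_form_def exponents_def by blast
    then show "\<exists>C. \<forall>a b c d. f a b c d = (\<Sum>e\<in>exponents n. C e * monomial e a b c d)"
      using split[of "\<lambda>(i,j,k,l). coef i j k l"] by auto
  next
    assume "\<exists>C. \<forall>a b c d. f a b c d = (\<Sum>e\<in>exponents n. C e * monomial e a b c d)"
    then obtain C where "\<forall>a b c d. f a b c d = (\<Sum>e\<in>exponents n. C e * monomial e a b c d)"
      by blast
    then show "homogeneous_form n f"
      unfolding homogeneous_form_def exponents_def split[symmetric]
      by (intro exI[of _ "\<lambda>i j k l. C (i,j,k,l)"]) simp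
  qed
qed

lemma homogeneous_form_mult:
  assumes "homogeneous_form m f" and "homogeneous_form n g"
  shows "homogeneous_form (m + n) (\<lambda>a b c d. f a b c d * g a b c d)"
proof -
  obtain F G where
    F: "\<forall>a b c d. f a b c d = (\<Sum>e\<in>exponents m. F e * monomial e a b c d)" and
    G: "\<forall>a b c d. g a b c d = (\<Sum>e\<in>exponents n. G e * monomial e a b c d)"
    using assms unfolding homogeneous_form_iff by blast
  define plus :: "(nat \<times> nat \<times> nat \<times> nat) \<times> (nat \<times> nat \<times> nat \<times> nat) \<Rightarrow> _" where
    "plus = (\<lambda>((i,j,k,l), (i',j',k',l')). (i+i', j+j', k+k', l+l'))"
  let ?P = "exponents m \<times> exponents n"
  have plus_into: "plus ` ?P \<subseteq> exponents (m + n)"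
    by (auto simp: plus_def exponents_def)
  show ?thesis
    unfolding homogeneous_form_iff
  proof (intro exI allI)
    fix a b c d :: real
    let ?h = "\<lambda>x. F (fst x) * G (snd x) * monomial (plus x) a b c d"
    have "f a b c d * g a b c d = (\<Sum>x\<in>?P. ?h x)"
      unfolding F[rule_format] G[rule_format] sum_product sum.cartesian_product
      by (intro sum.cong) (auto simp: plus_def power_add mult_ac)
    also have "\<dots> = (\<Sum>e\<in>exponents (m + n). \<Sum>x\<in>{x. x \<in> ?P \<and> plus x = e}. ?h x)"
      by (rule sum.group[symmetric]) (auto simp: finite_exponents plus_into)
    also have "\<dots> = (\<Sum>e\<in>exponents (m + n).
        (\<Sum>x\<in>{x. x \<in> ?P \<and> plus x = e}. F (fst x) * G (snd x)) * monomial e a b c d)"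
      by (auto simp: sum_distrib_right intro!: sum.cong)
    finally show "f a b c d * g a b c d = (\<Sum>e\<in>exponents (m + n).
        (\<Sum>x\<in>{x. x \<in> ?P \<and> plus x = e}. F (fst x) * G (snd x)) * monomial e a b c d)" .
  qed
qed

lemma homogeneous_form_monomial: "homogeneous_form (i + j + k + l) (monomial (i,j,k,l))"
  unfolding homogeneous_form_iff
proof (intro exI allI)
  fix a b c d :: real
  let ?e = "(i,j,k,l)"
  have "(\<Sum>e\<in>exponents (i + j + k + l). of_bool (e = ?e) * monomial e a b c d)
      = (\<Sum>e\<in>exponents (i + j + k + l). if e = ?e then monomial ?e a b c d else 0)"
    by (intro sum.cong) auto
  also have "\<dots> = monomial ?e a b c d"
    by (subst sum.delta[OF finite_exponents]) (simp add: exponents_def)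
  finally show "monomial ?e a b c d =
      (\<Sum>e\<in>exponents (i + j + k + l). of_bool (e = ?e) * monomial e a b c d)" ..
qed

lemma homogeneous_form_scale:
  assumes "homogeneous_form n f"
  shows "homogeneous_form n (\<lambda>a b c d. r * f a b c d)"
proof -
  obtain C where "\<forall>a b c d. f a b c d = (\<Sum>e\<in>exponents n. C e * monomial e a b c d)"
    using assms unfolding homogeneous_form_iff by blast
  then show ?thesis
    unfolding homogeneous_form_iff
    by (intro exI[of _ "\<lambda>e. r * C e"]) (simp add: sum_distrib_left mult.assoc)
qed

lemma homogeneous_form_add:
  assumes "homogeneous_form n f" and "homogeneous_form n g"
  shows "homogeneous_form n (\<lambda>a b c d. f a b c d + g a b c d)"
proof -
  obtain F G where
    "\<forall>a b c d. f a b c d = (\<Sum>e\<in>exponents n. F e * monomial e a b c d)" and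
    "\<forall>a b c d. g a b c d = (\<Sum>e\<in>exponents n. G e * monomial e a b c d)"
    using assms unfolding homogeneous_form_iff by blast
  then show ?thesis
    unfolding homogeneous_form_iff
    by (intro exI[of _ "\<lambda>e. F e + G e"]) (simp add: sum.distrib distrib_right)
qed

lemma homogeneous_form_diff:
  "homogeneous_form n f \<Longrightarrow> homogeneous_form n g \<Longrightarrow>
     homogeneous_form n (\<lambda>a b c d. f a b c d - g a b c d)"
  using homogeneous_form_add[OF _ homogeneous_form_scale[of n g "-1"]] by simp

lemma homogeneous_form_const: "homogeneous_form 0 (\<lambda>a b c d. r)"
  using homogeneous_form_scale[OF homogeneous_form_monomial[of 0 0 0 0], of r]
  by (simp add: monomial_eq)

lemma homogeneous_form_coords:
  "homogeneous_form 1 (\<lambda>a b c d. a)" "homogeneous_form 1 (\<lambda>a b c d. b)"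
  "homogeneous_form 1 (\<lambda>a b c d. c)" "homogeneous_form 1 (\<lambda>a b c d. d)"
  using homogeneous_form_monomial[of 1 0 0 0] homogeneous_form_monomial[of 0 1 0 0]
    homogeneous_form_monomial[of 0 0 1 0] homogeneous_form_monomial[of 0 0 0 1]
  by (simp_all add: monomial_eq)

lemma homogeneous_form_power:
  "homogeneous_form n f \<Longrightarrow> homogeneous_form (k * n) (\<lambda>a b c d. f a b c d ^ k)"
  by (induction k) (simp_all add: homogeneous_form_const homogeneous_form_mult)

text \<open>Variants with the degree as a trailing equation, so that repeated rule application can
  infer the degrees of the factors.\<close>

lemma homogeneous_form_mult_degree:
  "homogeneous_form m f \<Longrightarrow> homogeneous_form n g \<Longrightarrow> k = m + n \<Longrightarrow>
     homogeneous_form k (\<lambda>a b c d. f a b c d * g a b c d)"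
  by (simp add: homogeneous_form_mult)

lemma homogeneous_form_power_degree:
  "homogeneous_form n f \<Longrightarrow> k = i * n \<Longrightarrow> homogeneous_form k (\<lambda>a b c d. f a b c d ^ i)"
  by (simp add: homogeneous_form_power)

lemmas homogeneous_form_intros =
  homogeneous_form_add homogeneous_form_diff homogeneous_form_mult_degree
  homogeneous_form_power_degree homogeneous_form_coords homogeneous_form_const

lemma homogeneous_form_s:
  "homogeneous_form 4 s0" "homogeneous_form 4 s1" "homogeneous_form 4 s2"
  "homogeneous_form 4 s3" "homogeneous_form 4 s4"
  unfolding s0_def[abs_def] s1_def[abs_def] s2_def[abs_def] s3_def[abs_def] s4_def[abs_def]
    T31_def T211_def
  by ((rule homogeneous_form_intros refl)+, simp_all)+

lemma quartic_form_gfrak: "quartic_form (gfrak t u)"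
  unfolding quartic_form_iff_homogeneous gfrak_def[abs_def]
  by (intro homogeneous_form_scale homogeneous_form_add homogeneous_form_s)

section \<open>Symmetric forms\<close>

lemma symmetric_form_of_power_sums:
  assumes "\<And>a b c d. f a b c d = F (\<lambda>k. a^k + b^k + c^k + d^k) (a*b*c*d)"
  shows "symmetric_form f"
  unfolding symmetric_form_def
proof (intro allI impI)
  fix \<sigma> :: "nat \<Rightarrow> nat" and x :: "nat \<Rightarrow> real"
  assume \<sigma>: "\<sigma> permutes {0..<4}"
  have sum4: "(\<Sum>i\<in>{0..<4}. g i) = g 0 + g 1 + g 2 + g 3" for g :: "nat \<Rightarrow> real"
    by (simp add: eval_nat_numeral atLeast0LessThan lessThan_Suc add_ac)
  have prod4: "(\<Prod>i\<in>{0..<4}. g i) = g 0 * g 1 * g 2 * g 3" for g :: "nat \<Rightarrow> real"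
    by (simp add: eval_nat_numeral atLeast0LessThan lessThan_Suc mult_ac)
  have "(\<lambda>k. x (\<sigma> 0)^k + x (\<sigma> 1)^k + x (\<sigma> 2)^k + x (\<sigma> 3)^k) = (\<lambda>k. x 0^k + x 1^k + x 2^k + x 3^k)"
  proof
    fix k
    show "x (\<sigma> 0)^k + x (\<sigma> 1)^k + x (\<sigma> 2)^k + x (\<sigma> 3)^k = x 0^k + x 1^k + x 2^k + x 3^k"
      using sum.permute[OF \<sigma>, of "\<lambda>i. x i ^ k"] by (simp add: sum4)
  qed
  moreover have "x (\<sigma> 0) * x (\<sigma> 1) * x (\<sigma> 2) * x (\<sigma> 3) = x 0 * x 1 * x 2 * x 3"
    using prod.permute[OF \<sigma>, of x] by (simp add: prod4)
  ultimately show "f (x (\<sigma> 0)) (x (\<sigma> 1)) (x (\<sigma> 2)) (x (\<sigma> 3)) = f (x 0) (x 1) (x 2) (x 3)"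
    by (simp add: assms)
qed

lemma symmetric_form_s:
  "symmetric_form s0" "symmetric_form s1" "symmetric_form s2" "symmetric_form s3" "symmetric_form s4"
proof -
  show "symmetric_form s0"
    by (rule symmetric_form_of_power_sums[where F = "\<lambda>p e. p 4 - 4*e"]) (simp add: s0_def)
  show "symmetric_form s1"
    by (rule symmetric_form_of_power_sums[where F = "\<lambda>p e. p 3 * p 1 - p 4 - 12*e"])
      (simp only: s1_def T31_def, algebra)
  show "symmetric_form s2"
    by (rule symmetric_form_of_power_sums[where F = "\<lambda>p e. (p 2 ^ 2 - p 4) / 2 - 6*e"])
      (simp only: s2_def, algebra)
  show "symmetric_form s3"
    by (rule symmetric_form_of_power_sums
        [where F = "\<lambda>p e. p 2 * (p 1 ^ 2 - p 2) / 2 - p 3 * p 1 + p 4 - 12*e"])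
      (simp only: s3_def T211_def, algebra)
  show "symmetric_form s4"
    by (rule symmetric_form_of_power_sums[where F = "\<lambda>p e. e"]) (simp add: s4_def)
qed

lemma symmetric_form_gfrak: "symmetric_form (gfrak t u)"
  using symmetric_form_s unfolding symmetric_form_def gfrak_def by simp

section \<open>Binary quadratic forms and elementary inequalities\<close>

lemma binary_quadratic_nonneg:
  fixes A B C x y :: real
  assumes "0 \<le> A" and "0 \<le> C" and "B^2 \<le> 4*A*C"
  shows "0 \<le> A*x^2 + B*x*y + C*y^2"
proof (cases "A = 0")
  case True
  then have "B = 0" using assms(3) by simp
  then show ?thesis using True assms(2) by simp
next
  case False
  have "4*A * (A*x^2 + B*x*y + C*y^2) = (2*A*x + B*y)^2 + (4*A*C - B^2) * y^2"
    by algebra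
  also have "\<dots> \<ge> 0" using assms(3) by simp
  finally show ?thesis using False assms(1) by (simp add: zero_le_mult_iff)
qed

lemma binary_quadratic_neg:
  fixes A B C :: real
  assumes "4*A*C < B^2"
  shows "\<exists>x y. A*x^2 + B*x*y + C*y^2 < 0"
proof (rule ccontr)
  assume "\<not> ?thesis"
  then have nonneg: "0 \<le> A*x^2 + B*x*y + C*y^2" for x y
    using not_less by blast
  have "0 \<le> A" using nonneg[of 1 0] by simp
  moreover have "A \<noteq> 0"
  proof
    assume "A = 0"
    then have "B \<noteq> 0" using assms by auto
    then show False using nonneg[of "-(C+1)/B" 1] \<open>A = 0\<close> by (simp add: field_simps)
  qed
  moreover have "A * (A*(-B)^2 + B*(-B)*(2*A) + C*(2*A)^2) = A^2 * (4*A*C - B^2)"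
    by algebra
  ultimately have "0 \<le> A^2 * (4*A*C - B^2)"
    using nonneg[of "-B" "2*A"] by (metis mult_nonneg_nonneg)
  then show False using assms \<open>A \<noteq> 0\<close> by (simp add: zero_le_mult_iff)
qed

lemma binary_quadratic_neg_off_line:
  fixes A B C t :: real
  assumes "4*A*C < B^2"
  shows "\<exists>x y. A*x^2 + B*x*y + C*y^2 < 0 \<and> y \<noteq> t*x"
proof -
  obtain x0 y0 where neg: "A*x0^2 + B*x0*y0 + C*y0^2 < 0"
    using binary_quadratic_neg[OF assms] by blast
  have "((\<lambda>e. A*x0^2 + B*x0*(y0+e) + C*(y0+e)^2) \<longlongrightarrow> A*x0^2 + B*x0*y0 + C*y0^2) (at 0)"
    by (auto intro!: tendsto_eq_intros)
  then have "\<forall>\<^sub>F e in at 0. A*x0^2 + B*x0*(y0+e) + C*(y0+e)^2 < 0"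
    using neg by (rule order_tendstoD)
  moreover have "\<forall>\<^sub>F e in at (0::real). e \<noteq> t*x0 - y0"
    by (rule eventually_neq_at_within)
  ultimately obtain e where "A*x0^2 + B*x0*(y0+e) + C*(y0+e)^2 < 0" "e \<noteq> t*x0 - y0"
    using eventually_happens'[OF at_neq_bot] eventually_conj by blast
  then show ?thesis by (intro exI[of _ x0] exI[of _ "y0+e"]) auto
qed

lemma sum_products_le_square:
  fixes x y z :: real
  shows "3*(x*y + y*z + z*x) \<le> (x + y + z)^2"
proof -
  have "2*((x + y + z)^2 - 3*(x*y + y*z + z*x)) = (x-y)^2 + (y-z)^2 + (z-x)^2"
    by algebra
  then show ?thesis
    by (smt (verit) zero_le_power2)
qed

text \<open>The hypotheses say that (P,E) lies in the triangle with vertices (0,0), (h,e), (-h,e);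
  the identity in the proof is the corresponding convex combination.\<close>

lemma pqr_triangle:
  fixes p q r k :: real
  assumes "p^2 + q^2 + r^2 = 3*k^2" and "0 \<le> k"
  shows "3*k*\<bar>p*q*r\<bar> \<le> p^2*q^2 + q^2*r^2 + r^2*p^2"
    and "p^2*q^2 + q^2*r^2 + r^2*p^2 \<le> 3*k^4"
proof -
  define E where "E = p^2*q^2 + q^2*r^2 + r^2*p^2"
  have "3*(p*q*r)^2*(p^2 + q^2 + r^2) \<le> E^2"
    using sum_products_le_square[of "p^2*q^2" "q^2*r^2" "r^2*p^2"]
    unfolding E_def by (simp add: algebra_simps power2_eq_square)
  then have "(3*k*\<bar>p*q*r\<bar>)^2 \<le> E^2"
    unfolding assms(1) by (simp add: power_mult_distrib mult_ac)
  moreover have "0 \<le> E"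
    unfolding E_def by simp
  ultimately show "3*k*\<bar>p*q*r\<bar> \<le> E"
    by (rule power2_le_imp_le)
  have "3*E \<le> (p^2 + q^2 + r^2)^2"
    using sum_products_le_square[of "p^2" "q^2" "r^2"] unfolding E_def by simp
  then show "E \<le> 3*k^4"
    unfolding assms(1) by (simp add: power_mult_distrib)
qed

lemma affine_nonneg_on_triangle:
  fixes \<alpha> \<beta> \<gamma> h e P E :: real
  assumes "0 < h" and "0 < e" and "e*\<bar>P\<bar> \<le> h*E" and "E \<le> e"
    and "0 \<le> \<alpha>" and "0 \<le> \<alpha> + \<beta>*h + \<gamma>*e" and "0 \<le> \<alpha> - \<beta>*h + \<gamma>*e"
  shows "0 \<le> \<alpha> + \<beta>*P + \<gamma>*E"
proof -
  have "2*e*h * (\<alpha> + \<beta>*P + \<gamma>*E) = 2*(e - E)*h * \<alpha>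
      + (h*E + e*P) * (\<alpha> + \<beta>*h + \<gamma>*e) + (h*E - e*P) * (\<alpha> - \<beta>*h + \<gamma>*e)"
    by algebra
  also have "\<dots> \<ge> 0"
  proof -
    have "\<bar>e*P\<bar> \<le> h*E"
      using assms(2,3) by (simp add: abs_mult)
    then have "0 \<le> h*E + e*P" "0 \<le> h*E - e*P"
      by (auto simp: abs_le_iff)
    then show ?thesis
      using assms(1,4-7) by (simp add: add_nonneg_nonneg)
  qed
  finally show ?thesis
    using mult_pos_pos[OF assms(2,1)] by (simp add: zero_le_mult_iff)
qed

section \<open>The forms G_{t,w}\<close>

definition gform :: "real \<Rightarrow> real \<Rightarrow> form4" where
  "gform t w a b c d = pG0 t w * s0 a b c d + pG1 t w * s1 a b c d + pG2 t w * s2 a b c d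
     + pG3 t w * s3 a b c d + pG4 t w * s4 a b c d"

definition rA :: "real \<Rightarrow> real \<Rightarrow> real" where
  "rA t w = w * (6*w - 3*(t-1)^2)"
definition rB :: "real \<Rightarrow> real \<Rightarrow> real" where
  "rB t w = 2*w * ((t^2 - 4*t - 3)*w + 3*(t-1)^2)"
definition rC :: "real \<Rightarrow> real \<Rightarrow> real" where
  "rC t w = w * (2*(2*t + 1)*w - 3*(t-1)^2)"

definition rform :: "real \<Rightarrow> real \<Rightarrow> real \<Rightarrow> real \<Rightarrow> real" where
  "rform t w x y = rA t w * x^2 + rB t w * x*y + rC t w * y^2"

lemma gform_three_one: "gform t w x x x y = (t*x - y)^2 * rform t w x y"
  unfolding gform_def rform_def rA_def rB_def rC_def s0_def s1_def s2_def s3_def s4_def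
    T31_def T211_def pG0_def pG1_def pG2_def pG3_def pG4_def
  by algebra

lemma gform_one_three: "gform t w y x x x = (t*x - y)^2 * rform t w x y"
  unfolding gform_def rform_def rA_def rB_def rC_def s0_def s1_def s2_def s3_def s4_def
    T31_def T211_def pG0_def pG1_def pG2_def pG3_def pG4_def
  by algebra

lemma rA_via_VF: "2 * rA t w = VF t w + (t-3)^2 * w^2"
  unfolding rA_def VF_def by algebra

lemma rC_via_VF: "2 * rC t w = VF t w + (t+1)^2 * w^2"
  unfolding rC_def VF_def by algebra

lemma rform_discriminant: "rB t w ^ 2 - 4 * rA t w * rC t w = -4 * (t-1)^2 * w^2 * VF t w"
  unfolding rA_def rB_def rC_def VF_def by algebra

lemma rform_nonneg:
  assumes "0 \<le> VF t w"
  shows "0 \<le> rform t w x y"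
  unfolding rform_def
proof (rule binary_quadratic_nonneg)
  have "0 \<le> (t-3)^2 * w^2" "0 \<le> (t+1)^2 * w^2" "0 \<le> (t-1)^2 * w^2 * VF t w"
    using assms by simp_all
  then show "0 \<le> rA t w" "0 \<le> rC t w" "(rB t w)^2 \<le> 4 * rA t w * rC t w"
    using rA_via_VF[of t w] rC_via_VF[of t w] rform_discriminant[of t w] assms by linarith+
qed

lemma rform_neg_off_line:
  assumes "w \<noteq> 0" and "VF t w < 0"
  shows "\<exists>x y. rform t w x y < 0 \<and> y \<noteq> t*x"
proof -
  have "t \<noteq> 1"
    using assms(2) by (auto simp: VF_def)
  then have "(t-1)^2 * w^2 * VF t w < 0"
    using assms by (simp add: mult_pos_neg)
  then have "4 * rA t w * rC t w < (rB t w)^2"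
    using rform_discriminant[of t w] by linarith
  then show ?thesis
    unfolding rform_def using binary_quadratic_neg_off_line by blast
qed

definition shift_coeff_P :: "real \<Rightarrow> real \<Rightarrow> real" where
  "shift_coeff_P t w = -16*(t-1)*(t+3) * VF t w"

definition shift_coeff_E :: "real \<Rightarrow> real \<Rightarrow> real" where
  "shift_coeff_E t w = -8*(t^4 - 4*t^3 - 10*t^2 - 36*t - 15)*w^2 - 64*(t-1)^2*(t^2+3)*w - 96*(t-1)^4"

lemma gform_shifted:
  "gform t w (m+p+q+r) (m+p-q-r) (m-p+q-r) (m-p-q+r) =
     2*(t-1)^4 * ((w+4)*(p^2+q^2+r^2) - w*m^2)^2 + shift_coeff_P t w * m * (p*q*r)
     + shift_coeff_E t w * (p^2*q^2 + q^2*r^2 + r^2*p^2)"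
  unfolding gform_def shift_coeff_P_def shift_coeff_E_def VF_def s0_def s1_def s2_def s3_def s4_def
    T31_def T211_def pG0_def pG1_def pG2_def pG3_def pG4_def
  by algebra

lemma gform_shifted_vertex:
  assumes "0 \<le> VF t w"
  shows "0 \<le> 2*(t-1)^4 * ((w+4)*(3*k^2) - w*m^2)^2 + shift_coeff_P t w * m * k^3
      + shift_coeff_E t w * (3*k^4)"
proof -
  have args: "m+k+k+k = m+3*k" "m+k-k-k = m-k" "m-k+k-k = m-k" "m-k-k+k = m-k"
    by simp_all
  have "gform t w (m+k+k+k) (m+k-k-k) (m-k+k-k) (m-k-k+k)
      = (t*(m-k) - (m+3*k))^2 * rform t w (m-k) (m+3*k)"
    unfolding args by (rule gform_one_three)
  also have "\<dots> \<ge> 0"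
    using rform_nonneg[OF assms] by simp
  finally show ?thesis
    unfolding gform_shifted by (simp add: power3_eq_cube power4_eq_xxxx power2_eq_square)
qed

lemma gform_shifted_nonneg:
  assumes "0 \<le> VF t w"
  shows "0 \<le> gform t w (m+p+q+r) (m+p-q-r) (m-p+q-r) (m-p-q+r)"
proof -
  define S P E where "S = p^2 + q^2 + r^2" and "P = p*q*r" and "E = p^2*q^2 + q^2*r^2 + r^2*p^2"
  have "0 \<le> 2*(t-1)^4 * ((w+4)*S - w*m^2)^2 + (shift_coeff_P t w * m) * P + shift_coeff_E t w * E"
  proof (cases "S = 0")
    case True
    then have "p = 0" "q = 0" "r = 0"
      unfolding S_def by (smt (verit) zero_le_power2 zero_eq_power2)+
    then show ?thesis
      unfolding P_def E_def by simp
  next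
    case False
    define k where "k = sqrt (S/3)"
    have "0 < S"
      using False unfolding S_def by (simp add: add_nonneg_nonneg order_le_neq_trans)
    then have "0 < k" and S_k: "S = 3*k^2"
      unfolding k_def by simp_all
    then have "3*k*\<bar>P\<bar> \<le> E" and "E \<le> 3*k^4"
      using pqr_triangle[of p q r k] unfolding S_def P_def E_def by simp_all
    then have "(3*k^4)*\<bar>P\<bar> \<le> k^3*E"
      using mult_left_mono[of "3*k*\<bar>P\<bar>" E "k^3"] \<open>0 < k\<close> by (simp add: power_numeral_reduce)
    then show ?thesis
      using affine_nonneg_on_triangle[where h = "k^3" and e = "3*k^4" and P = P and E = E]
        gform_shifted_vertex[OF assms, where m = m and k = k]
        gform_shifted_vertex[OF assms, where m = m and k = "-k"]
        \<open>0 < k\<close> \<open>E \<le> 3*k^4\<close>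
      unfolding S_k by simp
  qed
  then show ?thesis
    unfolding gform_shifted S_def P_def E_def by (simp add: mult.assoc)
qed

lemma gform_nonneg:
  assumes "0 \<le> VF t w"
  shows "0 \<le> gform t w a b c d"
proof -
  define m p q r where "m = (a+b+c+d)/4" and "p = (a+b-c-d)/4" and "q = (a-b+c-d)/4"
    and "r = (a-b-c+d)/4"
  have "a = m+p+q+r" "b = m+p-q-r" "c = m-p+q-r" "d = m-p-q+r"
    unfolding m_def p_def q_def r_def by (simp_all add: field_simps)
  then show ?thesis
    using gform_shifted_nonneg[OF assms, where m = m and p = p and q = q and r = r] by simp
qed

lemma gform_neg:
  assumes "w \<noteq> 0" and "VF t w < 0"
  shows "\<exists>x y. gform t w x x x y < 0"
proof -
  obtain x y where "rform t w x y < 0" and "y \<noteq> t*x"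
    using rform_neg_off_line[OF assms] by blast
  then have "gform t w x x x y < 0"
    unfolding gform_three_one by (simp add: mult_pos_neg)
  then show ?thesis by blast
qed

lemma gform_nonneg_iff:
  assumes "w \<noteq> 0"
  shows "(\<forall>a b c d. 0 \<le> gform t w a b c d) \<longleftrightarrow> 0 \<le> VF t w"
  using gform_nonneg gform_neg[OF assms] by (meson not_le)

lemma gform_pos:
  assumes "w \<noteq> 0"
  shows "\<exists>a b c d. 0 < gform t w a b c d"
proof (cases "t = 1")
  case True
  have "gform t w 1 0 0 0 = 6 * w^2"
    unfolding True gform_def s0_def s1_def s2_def s3_def s4_def T31_def T211_def pG0_def by simp
  then have "0 < gform t w 1 0 0 0"
    using assms by simp
  then show ?thesis by blast
next
  case False
  have "gform t w 1 1 1 1 = 2 * (t-1)^4 * w^2"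
    unfolding gform_def s0_def s1_def s2_def s3_def s4_def T31_def T211_def pG4_def by simp
  then have "0 < gform t w 1 1 1 1"
    using assms False by simp
  then show ?thesis by blast
qed

lemma omega_nonzero:
  assumes "u \<noteq> 0" and "u \<noteq> 1"
  shows "omega u \<noteq> 0"
proof -
  have "omega u = (u - 1)^2 / u"
    using assms(1) unfolding omega_def by (simp add: field_simps power2_eq_square)
  then show ?thesis
    using assms by simp
qed

lemma gfrak_eq_gform: "gfrak t u a b c d = u^2 * gform t (omega u) a b c d"
  unfolding gfrak_def gform_def ..

theorem theorem2p4:
  fixes t u :: real
  assumes "u \<noteq> 0" and "u \<noteq> 1"
  shows "(gfrak t u \<in> Ps44 \<longleftrightarrow> VF t (omega u) \<ge> 0)
         \<and> (\<lambda>a b c d. - gfrak t u a b c d) \<notin> Ps44"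
proof -
  have w: "omega u \<noteq> 0"
    using omega_nonzero[OF assms] .
  have "0 < u^2"
    using assms(1) by simp
  then have nonneg_iff: "(\<forall>a b c d. 0 \<le> gfrak t u a b c d) \<longleftrightarrow> 0 \<le> VF t (omega u)"
    unfolding gfrak_eq_gform gform_nonneg_iff[OF w, symmetric] by (simp add: zero_le_mult_iff)
  obtain a b c d where "0 < gfrak t u a b c d"
    using gform_pos[OF w] \<open>0 < u^2\<close> unfolding gfrak_eq_gform by (meson mult_pos_pos)
  then have "(\<lambda>a b c d. - gfrak t u a b c d) \<notin> Ps44"
    unfolding Ps44_def by (auto simp: not_le intro: exI[of _ a])
  moreover have "gfrak t u \<in> Ps44 \<longleftrightarrow> 0 \<le> VF t (omega u)"
    unfolding Ps44_def nonneg_iff[symmetric] using quartic_form_gfrak symmetric_form_gfrak by simp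
  ultimately show ?thesis by simp
qed

end
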